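(* Let $E$ be a set and let $\mathcal{F}$ be a set of finite nonempty subsets of $E$ satisfying the strong circuit elimination axiom: for every $C_0,C_1\in\mathcal{F}$, $e\in C_0\cap C_1$ and $f\in C_0\triangle C_1$ there is $C\in\mathcal{F}$ with $f\in C\subseteq(C_0\cup C_1)\setminus\{e\}$. Then the set $\mathcal{C}$ of $\subseteq$-minimal elements of $\mathcal{F}$ is the set of circuits of a finitary matroid $M$ on $E$, and each $F\in\mathcal{F}$ is a scrawl of $M$, i.e. a union of circuits of $M$.
   Context: A finitary matroid is a matroid on a possibly infinite ground set all of whose circuits are finite. $X\triangle Y=(X\setminus Y)\cup(Y\setminus X)$. *)

theory Defs
  imports Main
begin

text \<open>Matroids on a possibly infinite ground set, via the independence axioms
of Bruhn, Diestel, Kriesell, Pendavingh and Wollan.\<close>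

definition maximal_indep :: "'a set set \<Rightarrow> 'a set \<Rightarrow> bool" where
  "maximal_indep Ind I \<longleftrightarrow> I \<in> Ind \<and> (\<forall>J\<in>Ind. I \<subseteq> J \<longrightarrow> J = I)"

definition matroid :: "'a set \<Rightarrow> 'a set set \<Rightarrow> bool" where
  "matroid E Ind \<longleftrightarrow>
     (\<forall>I\<in>Ind. I \<subseteq> E) \<and>
     {} \<in> Ind \<and>
     (\<forall>I\<in>Ind. \<forall>J. J \<subseteq> I \<longrightarrow> J \<in> Ind) \<and>
     (\<forall>I\<in>Ind. \<forall>I'. \<not> maximal_indep Ind I \<and> maximal_indep Ind I' \<longrightarrow>
        (\<exists>x \<in> I' - I. insert x I \<in> Ind)) \<and>
     (\<forall>I X. I \<in> Ind \<and> I \<subseteq> X \<and> X \<subseteq> E \<longrightarrow>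
        (\<exists>M. M \<in> Ind \<and> I \<subseteq> M \<and> M \<subseteq> X \<and>
             (\<forall>M'\<in>Ind. M \<subseteq> M' \<and> M' \<subseteq> X \<longrightarrow> M' = M)))"

definition circuits :: "'a set \<Rightarrow> 'a set set \<Rightarrow> 'a set set" where
  "circuits E Ind = {C. C \<subseteq> E \<and> C \<notin> Ind \<and> (\<forall>D. D \<subset> C \<longrightarrow> D \<in> Ind)}"

definition finitary_matroid :: "'a set \<Rightarrow> 'a set set \<Rightarrow> bool" where
  "finitary_matroid E Ind \<longleftrightarrow> matroid E Ind \<and> (\<forall>C\<in>circuits E Ind. finite C)"

definition scrawl :: "'a set \<Rightarrow> 'a set set \<Rightarrow> 'a set \<Rightarrow> bool" where
  "scrawl E Ind X \<longleftrightarrow> (\<exists>S. S \<subseteq> circuits E Ind \<and> X = \<Union>S)"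

definition strong_circuit_elimination :: "'a set set \<Rightarrow> bool" where
  "strong_circuit_elimination F \<longleftrightarrow>
     (\<forall>C0\<in>F. \<forall>C1\<in>F. \<forall>e f. e \<in> C0 \<inter> C1 \<and> f \<in> (C0 - C1) \<union> (C1 - C0) \<longrightarrow>
        (\<exists>C\<in>F. f \<in> C \<and> C \<subseteq> (C0 \<union> C1) - {e}))"

definition minimal_elements :: "'a set set \<Rightarrow> 'a set set" where
  "minimal_elements F = {C \<in> F. \<forall>D\<in>F. D \<subseteq> C \<longrightarrow> D = C}"

end

theory Submission
  imports Defs
begin

text \<open>Declare a subset of \<open>E\<close> independent when it contains no member of \<open>F\<close>. Its circuits
are then exactly the minimal members of \<open>F\<close>. Strong circuit elimination, applied inside an
induction on a finite cardinality, lets one shrink a member of \<open>F\<close> through a prescribed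
element, which shows that every member of \<open>F\<close> is a union of minimal members and yields the
augmentation axiom. Since members of \<open>F\<close> are finite, independence is preserved under unions
of chains, and Zorn's lemma gives the maximality axiom.\<close>

definition indep_sets :: "'a set \<Rightarrow> 'a set set \<Rightarrow> 'a set set" where
  "indep_sets E F = {I. I \<subseteq> E \<and> (\<forall>C\<in>F. \<not> C \<subseteq> I)}"

lemma indep_sets_subset:
  assumes "I \<in> indep_sets E F" "J \<subseteq> I"
  shows "J \<in> indep_sets E F"
  using assms unfolding indep_sets_def by (simp, meson order_trans)

lemma strong_circuit_eliminationD:
  assumes "strong_circuit_elimination F" "C0 \<in> F" "C1 \<in> F" "e \<in> C0" "e \<in> C1"
    and "f \<in> C0" "f \<notin> C1"
  obtains C where "C \<in> F" "f \<in> C" "C \<subseteq> (C0 \<union> C1) - {e}"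
  using assms unfolding strong_circuit_elimination_def by blast

lemma circuits_indep_sets:
  assumes "\<forall>X\<in>F. X \<subseteq> E"
  shows "circuits E (indep_sets E F) = minimal_elements F"
proof
  show "circuits E (indep_sets E F) \<subseteq> minimal_elements F"
  proof
    fix C assume "C \<in> circuits E (indep_sets E F)"
    then have C: "C \<subseteq> E" "C \<notin> indep_sets E F" "\<And>D. D \<subset> C \<Longrightarrow> D \<in> indep_sets E F"
      unfolding circuits_def by auto
    then obtain D where D: "D \<in> F" "D \<subseteq> C"
      unfolding indep_sets_def by auto
    with C(3) have "D = C"
      unfolding indep_sets_def by blast
    with D C(3) show "C \<in> minimal_elements F"
      unfolding indep_sets_def minimal_elements_def by blast
  qed
  show "minimal_elements F \<subseteq> circuits E (indep_sets E F)"
    using assms unfolding minimal_elements_def circuits_def indep_sets_def by blast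
qed

lemma minimal_element_through:
  assumes fin: "\<forall>X\<in>F. finite X \<and> X \<noteq> {}" and sce: "strong_circuit_elimination F"
    and "D \<in> F" "f \<in> D"
  shows "\<exists>C\<in>minimal_elements F. f \<in> C \<and> C \<subseteq> D"
  using assms(3,4)
proof (induction "card D" arbitrary: D rule: less_induct)
  case less
  show ?case
  proof (cases "D \<in> minimal_elements F")
    case True
    with less.prems show ?thesis by blast
  next
    case False
    with less.prems obtain D' where D': "D' \<in> F" "D' \<subset> D"
      unfolding minimal_elements_def by blast
    have "finite D" using fin less.prems by blast
    show ?thesis
    proof (cases "f \<in> D'")
      case True
      with D' \<open>finite D\<close> less.hyps[of D'] show ?thesis
        by (meson psubset_card_mono psubset_imp_subset order_trans)
    next
      case False
      obtain e where "e \<in> D'" using fin D' by blast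
      with sce less.prems D' False obtain C where C: "C \<in> F" "f \<in> C" "C \<subseteq> (D \<union> D') - {e}"
        by (elim strong_circuit_eliminationD) auto
      with D' have "C \<subseteq> D - {e}" by blast
      with \<open>e \<in> D'\<close> D' \<open>finite D\<close> have "card C < card D"
        by (meson card_Diff1_less card_mono finite_Diff order_le_less_trans psubset_imp_subset subsetD)
      with less.hyps[of C] C \<open>C \<subseteq> D - {e}\<close> show ?thesis by blast
    qed
  qed
qed

lemma member_eq_Union_minimal_elements:
  assumes "\<forall>X\<in>F. finite X \<and> X \<noteq> {}" "strong_circuit_elimination F" "X \<in> F"
  shows "X = \<Union>{C\<in>minimal_elements F. C \<subseteq> X}"
  using minimal_element_through[OF assms(1,2,3)] by blast

text \<open>The elements of \<open>I' - I\<close> play the role of elements spanned by \<open>I\<close>: each lies in a member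
of \<open>F\<close> inside \<open>insert x I\<close>. Eliminating these elements one at a time from a member through
\<open>y\<close> drives it into \<open>insert y I\<close>, which is forbidden.\<close>

lemma no_member_through_in_union:
  assumes fin: "\<forall>X\<in>F. finite X" and sce: "strong_circuit_elimination F"
    and "y \<notin> I"
    and spanned: "\<And>x. x \<in> I' - I \<Longrightarrow> \<exists>Cx\<in>F. x \<in> Cx \<and> Cx \<subseteq> insert x I"
    and free: "\<And>C. C \<in> F \<Longrightarrow> \<not> C \<subseteq> insert y I"
    and "C \<in> F" "y \<in> C" "C \<subseteq> insert y (I \<union> I')"
  shows False
  using assms(6-8)
proof (induction "card (C - insert y I)" arbitrary: C rule: less_induct)
  case less
  obtain x where x: "x \<in> C - insert y I" using free less.prems by blast
  with less.prems have "x \<in> I' - I" by blast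
  then obtain Cx where Cx: "Cx \<in> F" "x \<in> Cx" "Cx \<subseteq> insert x I" using spanned by blast
  with x \<open>y \<notin> I\<close> have "y \<notin> Cx" by blast
  with sce less.prems Cx x obtain C' where C': "C' \<in> F" "y \<in> C'" "C' \<subseteq> (C \<union> Cx) - {x}"
    by (elim strong_circuit_eliminationD) auto
  have "finite C" using fin less.prems by blast
  have "C' - insert y I \<subseteq> (C - insert y I) - {x}" using C' Cx by blast
  with x \<open>finite C\<close> have "card (C' - insert y I) < card (C - insert y I)"
    by (meson card_Diff1_less card_mono finite_Diff order_le_less_trans)
  moreover have "C' \<subseteq> insert y (I \<union> I')" using C' Cx less.prems \<open>x \<in> I' - I\<close> by blast
  ultimately show False using less.hyps C' by blast
qed

lemma indep_sets_augment:
  assumes fin: "\<forall>X\<in>F. finite X" and sce: "strong_circuit_elimination F"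
    and I: "I \<in> indep_sets E F" "\<not> maximal_indep (indep_sets E F) I"
    and I': "maximal_indep (indep_sets E F) I'"
  shows "\<exists>x\<in>I' - I. insert x I \<in> indep_sets E F"
proof (rule ccontr)
  assume no_aug: "\<not> ?thesis"
  have "I' \<in> indep_sets E F" using I' unfolding maximal_indep_def by blast
  obtain y where "y \<notin> I" and Iy: "insert y I \<in> indep_sets E F"
  proof -
    from I obtain J where J: "J \<in> indep_sets E F" "I \<subseteq> J" "J \<noteq> I"
      unfolding maximal_indep_def by blast
    then obtain y where "y \<in> J" "y \<notin> I" by blast
    with J have "insert y I \<in> indep_sets E F" unfolding indep_sets_def by blast
    with \<open>y \<notin> I\<close> show thesis by (rule that)
  qed
  with no_aug have "y \<notin> I'" by blast
  with I' have "insert y I' \<notin> indep_sets E F" unfolding maximal_indep_def by blast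
  moreover have "insert y I' \<subseteq> E"
    using Iy \<open>I' \<in> indep_sets E F\<close> unfolding indep_sets_def by blast
  ultimately obtain C where C: "C \<in> F" "C \<subseteq> insert y I'" unfolding indep_sets_def by blast
  with \<open>I' \<in> indep_sets E F\<close> have "y \<in> C" unfolding indep_sets_def by blast
  have spanned: "\<exists>Cx\<in>F. x \<in> Cx \<and> Cx \<subseteq> insert x I" if x: "x \<in> I' - I" for x
  proof -
    have "insert x I \<subseteq> E"
      using x I \<open>I' \<in> indep_sets E F\<close> unfolding indep_sets_def by blast
    with no_aug x obtain Cx where "Cx \<in> F" "Cx \<subseteq> insert x I"
      unfolding indep_sets_def by blast
    with I show ?thesis unfolding indep_sets_def by blast
  qed
  have free: "\<not> C' \<subseteq> insert y I" if "C' \<in> F" for C'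
    using Iy that unfolding indep_sets_def by blast
  from C have "C \<subseteq> insert y (I \<union> I')" by blast
  with no_member_through_in_union[OF fin sce \<open>y \<notin> I\<close> spanned free] C(1) \<open>y \<in> C\<close>
  show False by blast
qed

lemma indep_sets_Union_chain:
  assumes fin: "\<forall>X\<in>F. finite X" and "\<C> \<noteq> {}" "subset.chain (indep_sets E F) \<C>"
  shows "\<Union>\<C> \<in> indep_sets E F"
proof -
  have sub: "\<C> \<subseteq> indep_sets E F" using assms(3) by (simp add: subset.chain_def)
  have "\<not> C \<subseteq> \<Union>\<C>" if "C \<in> F" for C
  proof
    assume "C \<subseteq> \<Union>\<C>"
    moreover have "finite C" using fin that by blast
    ultimately obtain B where "B \<in> \<C>" "C \<subseteq> B"
      using finite_subset_Union_chain assms(2,3) by metis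
    with sub that show False unfolding indep_sets_def by blast
  qed
  with sub show ?thesis unfolding indep_sets_def by blast
qed

lemma indep_sets_maximal:
  assumes fin: "\<forall>X\<in>F. finite X" and "I \<in> indep_sets E F" "I \<subseteq> X"
  shows "\<exists>M. M \<in> indep_sets E F \<and> I \<subseteq> M \<and> M \<subseteq> X \<and>
           (\<forall>M'\<in>indep_sets E F. M \<subseteq> M' \<and> M' \<subseteq> X \<longrightarrow> M' = M)"
proof -
  let ?A = "{M\<in>indep_sets E F. I \<subseteq> M \<and> M \<subseteq> X}"
  have "\<Union>\<C> \<in> ?A" if "\<C> \<noteq> {}" and chain: "subset.chain ?A \<C>" for \<C>
  proof -
    from chain have sub: "\<C> \<subseteq> ?A" and "subset.chain (indep_sets E F) \<C>"
      unfolding subset.chain_def by auto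
    with fin \<open>\<C> \<noteq> {}\<close> have "\<Union>\<C> \<in> indep_sets E F"
      by (simp add: indep_sets_Union_chain)
    moreover from sub \<open>\<C> \<noteq> {}\<close> have "I \<subseteq> \<Union>\<C>" "\<Union>\<C> \<subseteq> X" by auto
    ultimately show ?thesis by blast
  qed
  moreover have "?A \<noteq> {}" using assms(2,3) by blast
  ultimately obtain M where "M \<in> ?A" and max: "\<forall>Y\<in>?A. M \<subseteq> Y \<longrightarrow> Y = M"
    using subset_Zorn_nonempty[of ?A] by blast
  then have M: "M \<in> indep_sets E F" "I \<subseteq> M" "M \<subseteq> X" by auto
  show ?thesis
  proof (intro exI conjI ballI impI)
    fix M' assume M': "M' \<in> indep_sets E F" "M \<subseteq> M' \<and> M' \<subseteq> X"
    with \<open>I \<subseteq> M\<close> have "I \<subseteq> M'" by (meson subset_trans)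
    with M' max show "M' = M" by blast
  qed (fact M)+
qed

lemma matroid_indep_sets:
  assumes "\<forall>X\<in>F. X \<subseteq> E \<and> finite X \<and> X \<noteq> {}" "strong_circuit_elimination F"
  shows "matroid E (indep_sets E F)"
  unfolding matroid_def
proof (intro conjI ballI allI impI)
  show "I \<subseteq> E" if "I \<in> indep_sets E F" for I
    using that unfolding indep_sets_def by blast
  show "{} \<in> indep_sets E F"
    using assms(1) unfolding indep_sets_def by blast
  show "J \<in> indep_sets E F" if "I \<in> indep_sets E F" "J \<subseteq> I" for I J
    using that by (rule indep_sets_subset)
  show "\<exists>x\<in>I' - I. insert x I \<in> indep_sets E F"
    if "I \<in> indep_sets E F"
      "\<not> maximal_indep (indep_sets E F) I \<and> maximal_indep (indep_sets E F) I'" for I I'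
    using that assms indep_sets_augment[of F I E I'] by blast
  show "\<exists>M. M \<in> indep_sets E F \<and> I \<subseteq> M \<and> M \<subseteq> X \<and>
          (\<forall>M'\<in>indep_sets E F. M \<subseteq> M' \<and> M' \<subseteq> X \<longrightarrow> M' = M)"
    if "I \<in> indep_sets E F \<and> I \<subseteq> X \<and> X \<subseteq> E" for I X
    using that assms(1) by (intro indep_sets_maximal) auto
qed

theorem lemma2p5:
  fixes E :: "'a set" and F :: "'a set set"
  assumes "\<forall>X\<in>F. X \<subseteq> E \<and> finite X \<and> X \<noteq> {}"
    and "strong_circuit_elimination F"
  shows "\<exists>Ind. finitary_matroid E Ind \<and> circuits E Ind = minimal_elements F \<and>
           (\<forall>X\<in>F. scrawl E Ind X)"
proof -
  have circ: "circuits E (indep_sets E F) = minimal_elements F"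
    using assms(1) by (simp add: circuits_indep_sets)
  have "finitary_matroid E (indep_sets E F)"
    unfolding finitary_matroid_def circ
  proof
    show "matroid E (indep_sets E F)" using assms by (rule matroid_indep_sets)
    show "\<forall>C\<in>minimal_elements F. finite C"
      using assms(1) unfolding minimal_elements_def by blast
  qed
  moreover have "scrawl E (indep_sets E F) X" if "X \<in> F" for X
  proof -
    have X_eq: "X = \<Union>{C\<in>minimal_elements F. C \<subseteq> X}"
      using assms that by (simp add: member_eq_Union_minimal_elements)
    show ?thesis unfolding scrawl_def circ by (rule exI, rule conjI[OF _ X_eq]) (rule Collect_subset)
  qed
  ultimately show ?thesis using circ by blast
qed

end
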